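(* For all integers $r$ and all $k\in\{0,1,2,3\}$, the space $\mathcal P_r\Lambda^k(T^3)$ has a basis that is $S_4$-invariant up to sign.
   Context: $T^3\subset\mathbb R^4$ is the standard simplex $\{\lambda_i\ge0,\ \sum\lambda_i=1\}$. $\mathcal P_r\Lambda^k(T^3)$ is the space of restrictions to $T^3$ of $k$-forms on $\mathbb R^4$ with polynomial coefficients of degree at most $r$ (zero if $r<0$). $S_4$ acts by pullback: for $\pi\in S_4$, $S_\pi(\lambda_0,\dots,\lambda_3)=(\lambda_{\pi(0)},\dots,\lambda_{\pi(3)})$ and $\pi$ acts by $S_\pi^*$. A basis is invariant up to sign if every group element maps each basis element to plus or minus a basis element. *)

theory Defs
  imports "HOL-Analysis.Analysis" "HOL-Library.Function_Algebras"
begin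

text \<open>Points of R^4 are vectors in real^4; coordinates lambda_0..lambda_3 are indexed by the type 4.\<close>

definition T3 :: "(real^4) set" where
  "T3 = {x. (\<forall>i. 0 \<le> x $ i) \<and> (\<Sum>i\<in>UNIV. x $ i) = 1}"

text \<open>Tangent space of T3 (direction of its affine hull).\<close>
definition tangentV :: "(real^4) set" where
  "tangentV = {v. (\<Sum>i\<in>UNIV. v $ i) = 0}"

text \<open>Polynomial functions on R^4 of total degree at most r (the zero function if r < 0).\<close>
definition poly_fun :: "int \<Rightarrow> (real^4 \<Rightarrow> real) \<Rightarrow> bool" where
  "poly_fun r p \<longleftrightarrow> (\<exists>c :: (4 \<Rightarrow> nat) \<Rightarrow> real.
      p = (\<lambda>x. \<Sum>\<alpha>\<in>{\<alpha> :: 4 \<Rightarrow> nat. int (sum \<alpha> UNIV) \<le> r}.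
                 c \<alpha> * (\<Prod>i\<in>UNIV. (x $ i) ^ (\<alpha> i))))"

text \<open>Value of d lambda_{s 0} wedge ... wedge d lambda_{s (k-1)} on the vectors vs 0, ..., vs (k-1):
  the determinant of the k x k matrix (vs j) $ (s i).\<close>
definition wedge_dl :: "nat \<Rightarrow> (nat \<Rightarrow> 4) \<Rightarrow> (nat \<Rightarrow> real^4) \<Rightarrow> real" where
  "wedge_dl k s vs = (\<Sum>\<tau> | \<tau> permutes {..<k}. of_int (sign \<tau>) * (\<Prod>i<k. vs (\<tau> i) $ s i))"

text \<open>The k-form sum_s p_s(x) d lambda_s on R^4, evaluated at x on vectors vs.\<close>
definition form_eval :: "nat \<Rightarrow> ((nat \<Rightarrow> 4) \<Rightarrow> real^4 \<Rightarrow> real) \<Rightarrow> real^4 \<Rightarrow> (nat \<Rightarrow> real^4) \<Rightarrow> real" where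
  "form_eval k p x vs = (\<Sum>s\<in>PiE {..<k} (\<lambda>_. UNIV). p s x * wedge_dl k s vs)"

text \<open>Restriction (trace) to T3: only base points in T3 and tangent vectors of T3 matter;
  elsewhere the value is normalised to 0, so that equality of restricted forms is equality of functions.\<close>
definition restr_T3 :: "nat \<Rightarrow> (real^4 \<Rightarrow> (nat \<Rightarrow> real^4) \<Rightarrow> real) \<Rightarrow> real^4 \<Rightarrow> (nat \<Rightarrow> real^4) \<Rightarrow> real" where
  "restr_T3 k f = (\<lambda>x vs. if x \<in> T3 \<and> (\<forall>j<k. vs j \<in> tangentV) then f x vs else 0)"

definition PrLk :: "int \<Rightarrow> nat \<Rightarrow> (real^4 \<Rightarrow> (nat \<Rightarrow> real^4) \<Rightarrow> real) set" where
  "PrLk r k = {restr_T3 k (form_eval k p) | p. \<forall>s. poly_fun r (p s)}"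

definition fscale :: "real \<Rightarrow> (real^4 \<Rightarrow> (nat \<Rightarrow> real^4) \<Rightarrow> real) \<Rightarrow> (real^4 \<Rightarrow> (nat \<Rightarrow> real^4) \<Rightarrow> real)" where
  "fscale c f = (\<lambda>x vs. c * f x vs)"

definition S_perm :: "(4 \<Rightarrow> 4) \<Rightarrow> real^4 \<Rightarrow> real^4" where
  "S_perm \<pi> x = (\<chi> i. x $ \<pi> i)"

text \<open>Pullback S_pi^* of a form: (S^* w)_x(v_1,...,v_k) = w_{S x}(S v_1, ..., S v_k) (S is linear).\<close>
definition pullback :: "(4 \<Rightarrow> 4) \<Rightarrow> (real^4 \<Rightarrow> (nat \<Rightarrow> real^4) \<Rightarrow> real) \<Rightarrow> (real^4 \<Rightarrow> (nat \<Rightarrow> real^4) \<Rightarrow> real)" where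
  "pullback \<pi> f = (\<lambda>x vs. f (S_perm \<pi> x) (\<lambda>j. S_perm \<pi> (vs j)))"

end

theory Submission
  imports Defs
begin

text \<open>On \<open>T\<^sup>3\<close> we have \<open>\<lambda>\<^sub>0 + \<lambda>\<^sub>1 + \<lambda>\<^sub>2 + \<lambda>\<^sub>3 = 1\<close>, so polynomial coefficients of
  degree at most \<open>r\<close> may be taken homogeneous of degree exactly \<open>r\<close>, and only the values of
  forms on tangent vectors matter. The constant \<open>k\<close>-forms on the three-dimensional tangent space
  have a basis \<open>\<omega>\<^sub>t\<close> that \<open>S\<^sub>4\<close> permutes up to sign; for \<open>k = 1, 2\<close> it is indexed by the
  three ways of splitting the vertices into two pairs. Hence the forms \<open>\<lambda>\<^sup>\<alpha> \<omega>\<^sub>t\<close> with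
  \<open>|\<alpha>| = r\<close> are permuted up to sign. They span, because every wedge product of coordinate
  differentials restricted to the tangent space is a combination of the \<open>\<omega>\<^sub>t\<close>, with
  coefficients read off from its values on vectors dual to the \<open>\<omega>\<^sub>t\<close>.
  They are independent, because the dual vectors separate the \<open>\<omega>\<^sub>t\<close> and homogeneous
  monomials of equal degree are independent on \<open>T\<^sup>3\<close>: the substitution
  \<open>\<lambda>\<^sub>i = t ^ m ^ i\<close> turns them into distinct powers of \<open>t\<close>.\<close>

section \<open>Forms on the simplex\<close>

interpretation forms: module fscale
  by unfold_locales (auto simp: fscale_def fun_eq_iff algebra_simps)

lemma (in module) independent_imageI:
  assumes family: "\<And>J u i. finite J \<Longrightarrow> J \<subseteq> I \<Longrightarrow> (\<Sum>j\<in>J. scale (u j) (f j)) = 0 \<Longrightarrow> i \<in> J \<Longrightarrow> u i = 0"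
  shows "independent (f ` I)"
proof -
  have inj: "inj_on f I"
  proof (rule inj_onI, rule ccontr)
    fix i j assume ij: "i \<in> I" "j \<in> I" "f i = f j" "i \<noteq> j"
    define u where "u l = (if l = i then 1 else - 1 :: 'a)" for l
    have "(\<Sum>l\<in>{i, j}. scale (u l) (f l)) = 0"
      using ij by (simp add: u_def)
    then have "u i = 0"
      using ij by (intro family[of "{i, j}"]) auto
    then show False
      by (simp add: u_def)
  qed
  show ?thesis
    unfolding independent_explicit_module
  proof (intro allI impI)
    fix T u v assume T: "finite T" "T \<subseteq> f ` I" "(\<Sum>v\<in>T. scale (u v) v) = 0" "v \<in> T"
    define J where "J = {j \<in> I. f j \<in> T}"
    have T_eq: "T = f ` J" and inj_J: "inj_on f J"
      using T(2) inj by (auto simp: J_def intro: inj_on_subset)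
    have "finite J"
      using T(1) T_eq inj_J finite_image_iff by blast
    moreover have "(\<Sum>j\<in>J. scale (u (f j)) (f j)) = 0"
      using T(3) by (simp add: T_eq sum.reindex[OF inj_J])
    moreover obtain j where "j \<in> J" "v = f j"
      using T(4) T_eq by blast
    ultimately show "u v = 0"
      using family[of J "u \<circ> f" j] by (auto simp: J_def)
  qed
qed

lemma sum_form_apply: "(\<Sum>i\<in>S. f i) x vs = (\<Sum>i\<in>S. f i x vs)"
  by (induct S rule: infinite_finite_induct) auto

lemma restr_T3_cong:
  assumes "\<And>x vs. x \<in> T3 \<Longrightarrow> \<forall>j<k. vs j \<in> tangentV \<Longrightarrow> f x vs = g x vs"
  shows "restr_T3 k f = restr_T3 k g"
  using assms by (auto simp: restr_T3_def fun_eq_iff)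

lemma restr_T3_sum: "restr_T3 k (\<lambda>x vs. \<Sum>i\<in>S. f i x vs) = (\<Sum>i\<in>S. restr_T3 k (f i))"
proof -
  have "(if P then \<Sum>i\<in>S. f i x vs else 0) = (\<Sum>i\<in>S. if P then f i x vs else 0)" for P x vs
    by (cases P) simp_all
  then show ?thesis
    by (simp add: restr_T3_def fun_eq_iff sum_form_apply)
qed

lemma restr_T3_scale: "restr_T3 k (\<lambda>x vs. c * f x vs) = fscale c (restr_T3 k f)"
  by (auto simp: restr_T3_def fscale_def fun_eq_iff)

lemma S_perm_T3_iff:
  assumes "\<pi> permutes UNIV"
  shows "S_perm \<pi> x \<in> T3 \<longleftrightarrow> x \<in> T3"
proof -
  have "(\<forall>i. 0 \<le> x $ \<pi> i) \<longleftrightarrow> (\<forall>i. 0 \<le> x $ i)"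
    by (metis assms permutes_inverses(1))
  moreover have "(\<Sum>i\<in>UNIV. x $ \<pi> i) = (\<Sum>i\<in>UNIV. x $ i)"
    using sum.permute[OF assms, of "\<lambda>i. x $ i"] by simp
  ultimately show ?thesis
    by (simp add: T3_def S_perm_def)
qed

lemma S_perm_tangentV_iff:
  assumes "\<pi> permutes UNIV"
  shows "S_perm \<pi> v \<in> tangentV \<longleftrightarrow> v \<in> tangentV"
  using sum.permute[OF assms, of "\<lambda>i. v $ i"] by (simp add: tangentV_def S_perm_def)

lemma tangentV_last: "v \<in> tangentV \<Longrightarrow> v $ 4 = - (v $ 1 + v $ 2 + v $ 3)"
  by (simp add: tangentV_def sum_4 algebra_simps)


section \<open>Wedge products of covectors\<close>

definition covec_eval :: "(4 \<Rightarrow> real) \<Rightarrow> real^4 \<Rightarrow> real" where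
  "covec_eval g v = (\<Sum>m\<in>UNIV. g m * v $ m)"

definition dlambda :: "4 \<Rightarrow> 4 \<Rightarrow> real" where
  "dlambda a m = (if m = a then 1 else 0)"

lemma covec_eval_dlambda [simp]: "covec_eval (dlambda a) v = v $ a"
  by (simp add: covec_eval_def dlambda_def if_distrib if_distribR cong: if_cong)

lemma covec_eval_add [simp]: "covec_eval (g + h) v = covec_eval g v + covec_eval h v"
  by (simp add: covec_eval_def sum.distrib algebra_simps)

lemma covec_eval_diff [simp]: "covec_eval (g - h) v = covec_eval g v - covec_eval h v"
  by (simp add: covec_eval_def sum_subtractf algebra_simps)

lemma covec_eval_S_perm:
  assumes "\<pi> permutes UNIV"
  shows "covec_eval g (S_perm \<pi> v) = covec_eval (g \<circ> inv \<pi>) v"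
  unfolding covec_eval_def S_perm_def
  using sum.permute[OF assms, of "\<lambda>m. g (inv \<pi> m) * v $ m"]
  by (simp add: permutes_inverses(2)[OF assms])

lemma dlambda_inv_perm:
  assumes "\<pi> permutes UNIV"
  shows "dlambda a (inv \<pi> m) = dlambda (\<pi> a) m"
  using assms by (auto simp: dlambda_def permutes_inverses)

definition wedge :: "nat \<Rightarrow> (nat \<Rightarrow> 4 \<Rightarrow> real) \<Rightarrow> (nat \<Rightarrow> real^4) \<Rightarrow> real" where
  "wedge k g vs =
     (\<Sum>\<tau> | \<tau> permutes {..<k}. of_int (sign \<tau>) * (\<Prod>i<k. covec_eval (g i) (vs (\<tau> i))))"

lemma wedge_dl_eq_wedge: "wedge_dl k s = wedge k (\<lambda>i. dlambda (s i))"
  by (simp add: fun_eq_iff wedge_dl_def wedge_def)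

lemma wedge_expand:
  "wedge k g vs = (\<Sum>s\<in>PiE {..<k} (\<lambda>_. UNIV). (\<Prod>i<k. g i (s i)) * wedge_dl k s vs)"
proof -
  have "wedge k g vs = (\<Sum>\<tau> | \<tau> permutes {..<k}. of_int (sign \<tau>) *
      (\<Sum>s\<in>PiE {..<k} (\<lambda>_. UNIV). \<Prod>i<k. g i (s i) * vs (\<tau> i) $ s i))"
    unfolding wedge_def covec_eval_def by (simp add: prod_sum_PiE)
  also have "\<dots> = (\<Sum>s\<in>PiE {..<k} (\<lambda>_. UNIV). \<Sum>\<tau> | \<tau> permutes {..<k}.
      (\<Prod>i<k. g i (s i)) * (of_int (sign \<tau>) * (\<Prod>i<k. vs (\<tau> i) $ s i)))"
    by (subst sum.swap) (simp add: sum_distrib_left prod.distrib algebra_simps)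
  also have "\<dots> = (\<Sum>s\<in>PiE {..<k} (\<lambda>_. UNIV). (\<Prod>i<k. g i (s i)) * wedge_dl k s vs)"
    by (simp add: wedge_dl_def sum_distrib_left)
  finally show ?thesis .
qed

lemma wedge_S_perm:
  assumes "\<pi> permutes UNIV"
  shows "wedge k g (\<lambda>j. S_perm \<pi> (vs j)) = wedge k (\<lambda>i. g i \<circ> inv \<pi>) vs"
  by (simp add: wedge_def covec_eval_S_perm[OF assms])

lemma wedge_0: "wedge 0 g vs = 1"
  by (simp add: wedge_def sign_id)

lemma wedge_1: "wedge 1 g vs = covec_eval (g 0) (vs 0)"
  by (simp add: wedge_def sign_id lessThan_Suc)

lemma wedge_2:
  "wedge 2 g vs = covec_eval (g 0) (vs 0) * covec_eval (g 1) (vs 1)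
                - covec_eval (g 0) (vs 1) * covec_eval (g 1) (vs 0)"
proof -
  have "{..<2::nat} = insert 0 {1}" by auto
  then show ?thesis
    unfolding wedge_def
    by (simp add: sum_over_permutations_insert permutes_sing sign_swap_id swap_id_eq)
qed

lemma wedge_3:
  "wedge 3 g vs =
     covec_eval (g 0) (vs 0) * covec_eval (g 1) (vs 1) * covec_eval (g 2) (vs 2)
   - covec_eval (g 0) (vs 0) * covec_eval (g 1) (vs 2) * covec_eval (g 2) (vs 1)
   - covec_eval (g 0) (vs 1) * covec_eval (g 1) (vs 0) * covec_eval (g 2) (vs 2)
   + covec_eval (g 0) (vs 1) * covec_eval (g 1) (vs 2) * covec_eval (g 2) (vs 0)
   + covec_eval (g 0) (vs 2) * covec_eval (g 1) (vs 0) * covec_eval (g 2) (vs 1)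
   - covec_eval (g 0) (vs 2) * covec_eval (g 1) (vs 1) * covec_eval (g 2) (vs 0)"
proof -
  have "{..<3::nat} = insert 0 (insert 1 {2})" by auto
  then show ?thesis
    unfolding wedge_def
    by (simp add: sum_over_permutations_insert permutes_sing sign_swap_id swap_id_eq
        permutation_swap_id sign_compose algebra_simps)
qed


section \<open>Constant forms on the tangent space of the simplex\<close>

text \<open>The paper's vertices \<open>0, 1, 2, 3\<close> are the elements \<open>1, 2, 3, 4 = 0\<close> of type \<open>4\<close>.
  For \<open>k = 1, 2\<close> the forms \<open>\<omega>\<^sub>t\<close>, \<open>t = (a, b, c, d)\<close>, are indexed by the three
  splittings \<open>{a, b} | {c, d}\<close> of the vertices: \<open>d\<lambda>\<^sub>a + d\<lambda>\<^sub>b - d\<lambda>\<^sub>c - d\<lambda>\<^sub>d\<close> and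
  \<open>(d\<lambda>\<^sub>a - d\<lambda>\<^sub>b) \<and> (d\<lambda>\<^sub>c - d\<lambda>\<^sub>d)\<close>; for \<open>k = 3\<close> the single form
  \<open>(d\<lambda>\<^sub>a - d\<lambda>\<^sub>b) \<and> (d\<lambda>\<^sub>a - d\<lambda>\<^sub>c) \<and> (d\<lambda>\<^sub>a - d\<lambda>\<^sub>d)\<close> is used, and for \<open>k = 0\<close>
  the constant \<open>1\<close>.\<close>

definition const_covecs :: "nat \<Rightarrow> 4 \<times> 4 \<times> 4 \<times> 4 \<Rightarrow> nat \<Rightarrow> 4 \<Rightarrow> real" where
  "const_covecs k t i = (case t of (a, b, c, d) \<Rightarrow>
     if k = 1 then dlambda a + dlambda b - dlambda c - dlambda d
     else if k = 2 then (if i = 0 then dlambda a - dlambda b else dlambda c - dlambda d)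
     else if i = 0 then dlambda a - dlambda b
     else if i = 1 then dlambda a - dlambda c
     else dlambda a - dlambda d)"

definition const_form :: "nat \<Rightarrow> 4 \<times> 4 \<times> 4 \<times> 4 \<Rightarrow> (nat \<Rightarrow> real^4) \<Rightarrow> real" where
  "const_form k t = wedge k (const_covecs k t)"

definition const_form_index :: "nat \<Rightarrow> (4 \<times> 4 \<times> 4 \<times> 4) set" where
  "const_form_index k =
     (if k = 1 \<or> k = 2 then {(1, 2, 3, 4), (1, 3, 2, 4), (1, 4, 2, 3)} else {(1, 2, 3, 4)})"

text \<open>Transposing the covectors of \<open>\<omega>\<^sub>t\<close> into vectors gives tangent vectors on which
  \<open>\<omega>\<^sub>t\<close> is nonzero and every other \<open>\<omega>\<^sub>t\<^sub>'\<close> vanishes.\<close>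

definition dual_vecs :: "nat \<Rightarrow> 4 \<times> 4 \<times> 4 \<times> 4 \<Rightarrow> nat \<Rightarrow> real^4" where
  "dual_vecs k t j = (\<chi> m. const_covecs k t j m)"

lemma dual_vecs_tangent: "dual_vecs k t j \<in> tangentV"
  by (cases t) (simp add: tangentV_def dual_vecs_def const_covecs_def dlambda_def
      sum.distrib sum_subtractf)

definition dual_norm :: "nat \<Rightarrow> real" where
  "dual_norm k = (if k = 0 then 1 else 4)"

lemma dual_norm_nonzero [simp]: "dual_norm k \<noteq> 0"
  by (simp add: dual_norm_def)

lemma const_form_S_perm:
  assumes "\<pi> permutes UNIV"
  shows "const_form k (a, b, c, d) (\<lambda>j. S_perm \<pi> (vs j)) = const_form k (\<pi> a, \<pi> b, \<pi> c, \<pi> d) vs"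
proof -
  have "const_covecs k (a, b, c, d) i \<circ> inv \<pi> = const_covecs k (\<pi> a, \<pi> b, \<pi> c, \<pi> d) i" for i
    by (simp add: const_covecs_def fun_eq_iff dlambda_inv_perm[OF assms])
  then show ?thesis
    by (simp add: const_form_def wedge_S_perm[OF assms])
qed

lemma const_form_dual:
  assumes "k \<le> 3" "t \<in> const_form_index k" "t' \<in> const_form_index k"
  shows "const_form k t (dual_vecs k t') = (if t = t' then dual_norm k else 0)"
proof -
  consider "k = 0" | "k = 1" | "k = 2" | "k = 3" using assms(1) by linarith
  then show ?thesis
  proof cases
    case 1
    then show ?thesis
      using assms(2,3) by (simp add: const_form_index_def const_form_def wedge_0 dual_norm_def)
  next
    case 2
    show ?thesis
      using assms(2,3) unfolding \<open>k = 1\<close> const_form_index_def const_form_def wedge_1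
      by (simp only: if_True simp_thms insert_iff empty_iff)
        (elim disjE; simp add: const_covecs_def dual_vecs_def dlambda_def dual_norm_def)
  next
    case 3
    show ?thesis
      using assms(2,3) unfolding \<open>k = 2\<close> const_form_index_def
      by (simp only: if_True simp_thms insert_iff empty_iff)
        (elim disjE; simp add: const_form_def wedge_2 const_covecs_def dual_vecs_def dlambda_def
          dual_norm_def)
  next
    case 4
    then show ?thesis
      using assms(2,3) by (simp add: const_form_index_def const_form_def wedge_3
          const_covecs_def dual_vecs_def dlambda_def dual_norm_def)
  qed
qed

lemma wedge_dl_tangent_decompose:
  assumes "k \<le> 3" and tangent: "\<forall>j<k. vs j \<in> tangentV"
  shows "dual_norm k * wedge_dl k s vs
           = (\<Sum>t\<in>const_form_index k. wedge_dl k s (dual_vecs k t) * const_form k t vs)"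
proof -
  have last: "vs j $ 4 = - (vs j $ 1 + vs j $ 2 + vs j $ 3)" if "j < k" for j
    using tangent that tangentV_last by blast
  consider "k = 0" | "k = 1" | "k = 2" | "k = 3" using assms(1) by linarith
  then show ?thesis
  proof cases
    case 1
    then show ?thesis
      by (simp add: const_form_index_def wedge_dl_eq_wedge const_form_def wedge_0 dual_norm_def)
  next
    case 2
    show ?thesis
      unfolding \<open>k = 1\<close> wedge_dl_eq_wedge const_form_def wedge_1 using exhaust_4[of "s 0"]
      by (elim disjE) (simp_all add: const_form_index_def const_covecs_def dual_vecs_def
          dlambda_def dual_norm_def last[unfolded \<open>k = 1\<close>] algebra_simps)
  next
    case 3
    show ?thesis
      unfolding \<open>k = 2\<close> wedge_dl_eq_wedge const_form_def wedge_2
      using exhaust_4[of "s 0"] exhaust_4[of "s 1"]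
      by (elim disjE) (simp_all add: const_form_index_def const_covecs_def dual_vecs_def
          dlambda_def dual_norm_def last[unfolded \<open>k = 2\<close>] algebra_simps)
  next
    case 4
    show ?thesis
      unfolding \<open>k = 3\<close> wedge_dl_eq_wedge const_form_def wedge_3
      using exhaust_4[of "s 0"] exhaust_4[of "s 1"] exhaust_4[of "s 2"]
      by (elim disjE) (simp_all add: const_form_index_def const_covecs_def dual_vecs_def
          dlambda_def dual_norm_def last[unfolded \<open>k = 3\<close>] algebra_simps)
  qed
qed

lemma const_form_permuted_dual:
  assumes "k \<le> 3" and "distinct [a, b, c, d]"
  shows "\<exists>t\<in>const_form_index k. \<exists>\<epsilon>\<in>{-1, 1}. \<forall>t'\<in>const_form_index k.
           const_form k (a, b, c, d) (dual_vecs k t') = (if t' = t then \<epsilon> * dual_norm k else 0)"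
proof -
  consider "k = 0" | "k = 1" | "k = 2" | "k = 3" using assms(1) by linarith
  then show ?thesis
  proof cases
    case 1
    then show ?thesis by (simp add: const_form_index_def const_form_def wedge_0 dual_norm_def)
  next
    case 2
    show ?thesis
      unfolding \<open>k = 1\<close> const_form_def wedge_1
      using exhaust_4[of a] exhaust_4[of b] exhaust_4[of c] exhaust_4[of d] assms(2)
      by (elim disjE) (simp_all add: const_form_index_def const_covecs_def dual_vecs_def
          dlambda_def dual_norm_def)
  next
    case 3
    show ?thesis
      unfolding \<open>k = 2\<close> const_form_def wedge_2
      using exhaust_4[of a] exhaust_4[of b] exhaust_4[of c] exhaust_4[of d] assms(2)
      by (elim disjE) (simp_all add: const_form_index_def const_covecs_def dual_vecs_def
          dlambda_def dual_norm_def)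
  next
    case 4
    show ?thesis
      unfolding \<open>k = 3\<close> const_form_def wedge_3
      using exhaust_4[of a] exhaust_4[of b] exhaust_4[of c] exhaust_4[of d] assms(2)
      by (elim disjE) (simp_all add: const_form_index_def const_covecs_def dual_vecs_def
          dlambda_def dual_norm_def)
  qed
qed

lemma wedge_tangent_decompose:
  assumes "k \<le> 3" and "\<forall>j<k. vs j \<in> tangentV"
  shows "dual_norm k * wedge k g vs
           = (\<Sum>t\<in>const_form_index k. wedge k g (dual_vecs k t) * const_form k t vs)"
proof -
  let ?S = "PiE {..<k} (\<lambda>_. UNIV :: 4 set)"
  have "dual_norm k * wedge k g vs = (\<Sum>s\<in>?S. (\<Prod>i<k. g i (s i)) * (dual_norm k * wedge_dl k s vs))"
    by (simp add: wedge_expand sum_distrib_left algebra_simps)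
  also have "\<dots> = (\<Sum>s\<in>?S. \<Sum>t\<in>const_form_index k.
      (\<Prod>i<k. g i (s i)) * wedge_dl k s (dual_vecs k t) * const_form k t vs)"
    by (simp add: wedge_dl_tangent_decompose[OF assms] sum_distrib_left mult.assoc)
  also have "\<dots> = (\<Sum>t\<in>const_form_index k. wedge k g (dual_vecs k t) * const_form k t vs)"
    by (subst sum.swap) (simp add: wedge_expand sum_distrib_right)
  finally show ?thesis .
qed

lemma const_form_permuted:
  assumes "k \<le> 3" and "distinct [a, b, c, d]"
  obtains t \<epsilon> where "t \<in> const_form_index k" "\<epsilon> \<in> {-1, 1}"
    "\<And>vs. \<forall>j<k. vs j \<in> tangentV \<Longrightarrow> const_form k (a, b, c, d) vs = \<epsilon> * const_form k t vs"
proof -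
  obtain t \<epsilon> where t: "t \<in> const_form_index k" "\<epsilon> \<in> {-1, 1}" and dual:
    "\<forall>t'\<in>const_form_index k.
       const_form k (a, b, c, d) (dual_vecs k t') = (if t' = t then \<epsilon> * dual_norm k else 0)"
    using const_form_permuted_dual[OF assms] by blast
  have "const_form k (a, b, c, d) vs = \<epsilon> * const_form k t vs" if "\<forall>j<k. vs j \<in> tangentV" for vs
  proof -
    have "dual_norm k * const_form k (a, b, c, d) vs
        = (\<Sum>t'\<in>const_form_index k. const_form k (a, b, c, d) (dual_vecs k t') * const_form k t' vs)"
      using wedge_tangent_decompose[OF assms(1) that] by (simp add: const_form_def)
    also have "\<dots> = (\<Sum>t'\<in>const_form_index k.
        if t' = t then \<epsilon> * dual_norm k * const_form k t' vs else 0)"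
      using dual by (intro sum.cong) auto
    also have "\<dots> = dual_norm k * (\<epsilon> * const_form k t vs)"
      using t(1) by (simp add: const_form_index_def)
    finally show ?thesis
      by simp
  qed
  then show ?thesis
    using that t by blast
qed


section \<open>Monomials on the simplex\<close>

definition monomial :: "(4 \<Rightarrow> nat) \<Rightarrow> real^4 \<Rightarrow> real" where
  "monomial \<alpha> x = (\<Prod>i\<in>UNIV. x $ i ^ \<alpha> i)"

lemma monomial_S_perm:
  assumes "\<pi> permutes UNIV"
  shows "monomial \<alpha> (S_perm \<pi> x) = monomial (\<alpha> \<circ> inv \<pi>) x"
proof -
  have "monomial (\<alpha> \<circ> inv \<pi>) x = (\<Prod>i\<in>UNIV. x $ \<pi> i ^ \<alpha> (inv \<pi> (\<pi> i)))"
    using prod.permute[OF assms, of "\<lambda>i. x $ i ^ \<alpha> (inv \<pi> i)"] by (simp add: monomial_def)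
  then show ?thesis
    by (simp add: monomial_def S_perm_def permutes_inverses(2)[OF assms])
qed

lemma monomial_increment: "monomial (\<beta>(i := Suc (\<beta> i))) x = monomial \<beta> x * x $ i"
proof -
  have "monomial (\<beta>(i := Suc (\<beta> i))) x = (\<Prod>j\<in>UNIV. x $ j ^ \<beta> j * (if j = i then x $ j else 1))"
    unfolding monomial_def by (intro prod.cong) auto
  then show ?thesis
    by (simp add: prod.distrib monomial_def)
qed

lemma sum_increment: "sum (\<beta>(i := Suc (\<beta> i))) UNIV = Suc (sum \<beta> (UNIV :: 'a::finite set))"
proof -
  have "sum (\<beta>(i := Suc (\<beta> i))) UNIV = Suc (\<beta> i) + sum \<beta> (UNIV - {i})"
    using sum.remove[of UNIV i "\<beta>(i := Suc (\<beta> i))"] by simp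
  also have "\<dots> = Suc (sum \<beta> UNIV)"
    using sum.remove[of UNIV i \<beta>] by simp
  finally show ?thesis .
qed

lemma monomial_homogenize: "x \<in> T3 \<Longrightarrow> monomial \<beta> x = (\<Sum>i\<in>UNIV. monomial (\<beta>(i := Suc (\<beta> i))) x)"
  by (simp add: monomial_increment sum_distrib_left[symmetric] T3_def)

lemma monomial_scaleR: "monomial \<alpha> (c *\<^sub>R x) = c ^ sum \<alpha> UNIV * monomial \<alpha> x"
  by (simp add: monomial_def power_sum power_mult_distrib prod.distrib)

definition digit_pos :: "4 \<Rightarrow> nat" where
  "digit_pos i = (if i = 1 then 0 else if i = 2 then 1 else if i = 3 then 2 else 3)"

definition kronecker :: "nat \<Rightarrow> (4 \<Rightarrow> nat) \<Rightarrow> nat" where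
  "kronecker m \<alpha> = (\<Sum>i\<in>UNIV. \<alpha> i * m ^ digit_pos i)"

lemma kronecker_horner: "kronecker m \<alpha> = \<alpha> 1 + m * (\<alpha> 2 + m * (\<alpha> 3 + m * \<alpha> 4))"
  by (simp add: kronecker_def sum_4 digit_pos_def algebra_simps power2_eq_square power3_eq_cube)

lemma kronecker_inj:
  assumes "\<forall>i. \<alpha> i < m" and "\<forall>i. \<beta> i < m" and "kronecker m \<alpha> = kronecker m \<beta>"
  shows "\<alpha> = \<beta>"
proof -
  have "m \<noteq> 0"
    using assms(1) by (metis not_less0)
  then have digits: "kronecker m \<gamma> mod m = \<gamma> 1 \<and> kronecker m \<gamma> div m mod m = \<gamma> 2
      \<and> kronecker m \<gamma> div m div m mod m = \<gamma> 3 \<and> kronecker m \<gamma> div m div m div m = \<gamma> 4"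
    if "\<forall>i. \<gamma> i < m" for \<gamma>
    using that by (simp add: kronecker_horner)
  show ?thesis
    using digits[OF assms(1)] digits[OF assms(2)] assms(3) by (simp add: fun_eq_iff forall_4)
qed

lemma monomial_kronecker: "monomial \<alpha> (\<chi> i. t ^ m ^ digit_pos i) = t ^ kronecker m \<alpha>"
  by (simp add: monomial_def kronecker_def power_sum power_mult[symmetric] mult.commute)

lemma sparse_poly_zero_on_positives_imp_coeff_zero:
  fixes d :: "'a \<Rightarrow> real"
  assumes "finite A" and "inj_on e A" and "\<And>t. t > 0 \<Longrightarrow> (\<Sum>a\<in>A. d a * t ^ e a) = 0"
    and "a \<in> A"
  shows "d a = 0"
proof -
  define N where "N = (\<Sum>a\<in>A. e a)"
  define c where "c j = (\<Sum>a\<in>{a\<in>A. e a = j}. d a)" for j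
  have exps: "e ` A \<subseteq> {..N}"
    unfolding N_def using assms(1) by (auto intro: member_le_sum)
  have "(\<Sum>j\<le>N. c j * t ^ j) = (\<Sum>a\<in>A. d a * t ^ e a)" for t :: real
  proof -
    have "(\<Sum>j\<le>N. c j * t ^ j) = (\<Sum>j\<le>N. \<Sum>a\<in>{a\<in>A. e a = j}. d a * t ^ e a)"
      unfolding c_def by (simp add: sum_distrib_right)
    also have "\<dots> = (\<Sum>a\<in>A. d a * t ^ e a)"
      by (rule sum.group[OF assms(1) _ exps]) simp
    finally show ?thesis .
  qed
  then have "{0<..} \<subseteq> {t::real. (\<Sum>j\<le>N. c j * t ^ j) = 0}"
    using assms(3) by auto
  then have "\<not> finite {t::real. (\<Sum>j\<le>N. c j * t ^ j) = 0}"
    using infinite_Ioi[of "0::real"] finite_subset by blast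
  then have "c (e a) = 0"
    using polyfun_finite_roots[of c N] exps assms(4) by auto
  moreover have "{b\<in>A. e b = e a} = {a}"
    using assms(2,4) by (auto simp: inj_on_def)
  ultimately show ?thesis
    by (simp add: c_def)
qed

lemma homogeneous_monomials_independent_on_T3:
  assumes "finite A" and "\<And>\<alpha>. \<alpha> \<in> A \<Longrightarrow> sum \<alpha> UNIV = n"
    and "\<And>x. x \<in> T3 \<Longrightarrow> (\<Sum>\<alpha>\<in>A. d \<alpha> * monomial \<alpha> x) = 0" and "\<alpha> \<in> A"
  shows "d \<alpha> = 0"
proof (rule sparse_poly_zero_on_positives_imp_coeff_zero[OF assms(1) _ _ assms(4)])
  have "\<beta> i < Suc n" if "\<beta> \<in> A" for \<beta> i
    using assms(2)[OF that] member_le_sum[of i UNIV \<beta>] by simp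
  then show "inj_on (kronecker (Suc n)) A"
    by (auto intro: inj_onI kronecker_inj)
next
  fix t :: real assume "t > 0"
  define y where "y = (\<chi> i. t ^ Suc n ^ digit_pos i)"
  define S where "S = (\<Sum>i\<in>UNIV. y $ i)"
  have y_pos: "y $ i > 0" for i
    using \<open>t > 0\<close> by (simp add: y_def)
  then have "S > 0"
    unfolding S_def by (simp add: sum_pos)
  then have "(1 / S) *\<^sub>R y \<in> T3"
    using y_pos by (auto simp: T3_def S_def sum_divide_distrib[symmetric] less_imp_le)
  then have "0 = (\<Sum>\<alpha>\<in>A. d \<alpha> * monomial \<alpha> ((1 / S) *\<^sub>R y))"
    using assms(3) by simp
  also have "\<dots> = (1 / S) ^ n * (\<Sum>\<alpha>\<in>A. d \<alpha> * t ^ kronecker (Suc n) \<alpha>)"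
    using assms(2) by (simp add: monomial_scaleR monomial_kronecker y_def sum_distrib_left algebra_simps)
  finally show "(\<Sum>\<alpha>\<in>A. d \<alpha> * t ^ kronecker (Suc n) \<alpha>) = 0"
    using \<open>S > 0\<close> by simp
qed


section \<open>Polynomial forms\<close>

lemma finite_degree_le: "finite {\<alpha>::4 \<Rightarrow> nat. int (sum \<alpha> UNIV) \<le> r}"
proof (rule finite_subset)
  show "{\<alpha>::4 \<Rightarrow> nat. int (sum \<alpha> UNIV) \<le> r} \<subseteq> PiE UNIV (\<lambda>_. {..nat r})"
  proof
    fix \<alpha> :: "4 \<Rightarrow> nat" assume "\<alpha> \<in> {\<alpha>. int (sum \<alpha> UNIV) \<le> r}"
    then have "int (sum \<alpha> UNIV) \<le> r"
      by (simp only: mem_Collect_eq)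
    moreover have "\<alpha> i \<le> sum \<alpha> UNIV" for i
      by (rule member_le_sum) auto
    ultimately have "int (\<alpha> i) \<le> r" for i
      by (meson of_nat_le_iff order_trans)
    then have "\<alpha> i \<le> nat r" for i
      by (metis nat_int nat_mono)
    then show "\<alpha> \<in> PiE UNIV (\<lambda>_. {..nat r})"
      by (simp add: PiE_iff)
  qed
  show "finite (PiE (UNIV::4 set) (\<lambda>_. {..nat r}))"
    by (rule finite_PiE) auto
qed

lemma poly_fun_monomial:
  assumes "int (sum \<alpha> UNIV) \<le> r"
  shows "poly_fun r (\<lambda>x. c * monomial \<alpha> x)"
  unfolding poly_fun_def
proof (intro exI[of _ "\<lambda>\<beta>. if \<beta> = \<alpha> then c else 0"] ext)
  fix x
  show "c * monomial \<alpha> x = (\<Sum>\<beta>\<in>{\<beta>. int (sum \<beta> UNIV) \<le> r}.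
          (if \<beta> = \<alpha> then c else 0) * (\<Prod>i\<in>UNIV. x $ i ^ \<beta> i))"
    using finite_degree_le[of r] assms by (simp add: monomial_def if_distrib if_distribR cong: if_cong)
qed

lemma poly_fun_add:
  assumes "poly_fun r p" and "poly_fun r q"
  shows "poly_fun r (\<lambda>x. p x + q x)"
proof -
  obtain cp cq where "p = (\<lambda>x. \<Sum>\<alpha>\<in>{\<alpha>. int (sum \<alpha> UNIV) \<le> r}. cp \<alpha> * (\<Prod>i\<in>UNIV. x $ i ^ \<alpha> i))"
    and "q = (\<lambda>x. \<Sum>\<alpha>\<in>{\<alpha>. int (sum \<alpha> UNIV) \<le> r}. cq \<alpha> * (\<Prod>i\<in>UNIV. x $ i ^ \<alpha> i))"
    using assms unfolding poly_fun_def by blast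
  then show ?thesis
    unfolding poly_fun_def
    by (intro exI[of _ "\<lambda>\<alpha>. cp \<alpha> + cq \<alpha>"]) (simp add: sum.distrib algebra_simps)
qed

lemma poly_fun_scale:
  assumes "poly_fun r p"
  shows "poly_fun r (\<lambda>x. c * p x)"
proof -
  obtain cp where "p = (\<lambda>x. \<Sum>\<alpha>\<in>{\<alpha>. int (sum \<alpha> UNIV) \<le> r}. cp \<alpha> * (\<Prod>i\<in>UNIV. x $ i ^ \<alpha> i))"
    using assms unfolding poly_fun_def by blast
  then show ?thesis
    unfolding poly_fun_def
    by (intro exI[of _ "\<lambda>\<alpha>. c * cp \<alpha>"]) (simp add: sum_distrib_left algebra_simps)
qed

lemma poly_fun_zero: "poly_fun r (\<lambda>x. 0)"
  unfolding poly_fun_def by (intro exI[of _ "\<lambda>_. 0"]) simp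

lemma PrLk_subspace: "forms.subspace (PrLk r k)"
proof (rule forms.subspaceI)
  show "0 \<in> PrLk r k"
    unfolding PrLk_def
    by (auto intro!: exI[of _ "\<lambda>s x. 0"] simp: poly_fun_zero restr_T3_def form_eval_def fun_eq_iff)
next
  fix f g assume "f \<in> PrLk r k" "g \<in> PrLk r k"
  then obtain p q where f: "f = restr_T3 k (form_eval k p)" "\<forall>s. poly_fun r (p s)"
    and g: "g = restr_T3 k (form_eval k q)" "\<forall>s. poly_fun r (q s)"
    unfolding PrLk_def by blast
  have "f + g = restr_T3 k (form_eval k (\<lambda>s x. p s x + q s x))"
    unfolding f g by (auto simp: restr_T3_def form_eval_def fun_eq_iff sum.distrib algebra_simps)
  then show "f + g \<in> PrLk r k"
    using f g poly_fun_add unfolding PrLk_def by blast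
next
  fix c f assume "f \<in> PrLk r k"
  then obtain p where f: "f = restr_T3 k (form_eval k p)" "\<forall>s. poly_fun r (p s)"
    unfolding PrLk_def by blast
  have "fscale c f = restr_T3 k (form_eval k (\<lambda>s x. c * p s x))"
    unfolding f by (auto simp: fscale_def restr_T3_def form_eval_def fun_eq_iff sum_distrib_left algebra_simps)
  then show "fscale c f \<in> PrLk r k"
    using f poly_fun_scale unfolding PrLk_def by blast
qed


section \<open>The basis\<close>

definition exps_of_degree :: "int \<Rightarrow> (4 \<Rightarrow> nat) set" where
  "exps_of_degree r = {\<alpha>. int (sum \<alpha> UNIV) = r}"

definition basis_form :: "nat \<Rightarrow> (4 \<Rightarrow> nat) \<Rightarrow> 4 \<times> 4 \<times> 4 \<times> 4 \<Rightarrow> real^4 \<Rightarrow> (nat \<Rightarrow> real^4) \<Rightarrow> real" where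
  "basis_form k \<alpha> t = restr_T3 k (\<lambda>x vs. monomial \<alpha> x * const_form k t vs)"

definition PrLk_basis :: "int \<Rightarrow> nat \<Rightarrow> (real^4 \<Rightarrow> (nat \<Rightarrow> real^4) \<Rightarrow> real) set" where
  "PrLk_basis r k = (\<lambda>(\<alpha>, t). basis_form k \<alpha> t) ` (exps_of_degree r \<times> const_form_index k)"

lemma basis_form_apply:
  "x \<in> T3 \<Longrightarrow> \<forall>j<k. vs j \<in> tangentV \<Longrightarrow> basis_form k \<alpha> t x vs = monomial \<alpha> x * const_form k t vs"
  by (simp add: basis_form_def restr_T3_def)

lemma basis_form_in_PrLk:
  assumes "\<alpha> \<in> exps_of_degree r"
  shows "basis_form k \<alpha> t \<in> PrLk r k"
proof -
  define p where "p s x = (\<Prod>i<k. const_covecs k t i (s i)) * monomial \<alpha> x" for s x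
  have "\<forall>s. poly_fun r (p s)"
    using assms poly_fun_monomial unfolding p_def exps_of_degree_def by auto
  moreover have "basis_form k \<alpha> t = restr_T3 k (form_eval k p)"
    unfolding basis_form_def form_eval_def p_def const_form_def wedge_expand
    by (simp add: sum_distrib_left algebra_simps)
  ultimately show ?thesis
    unfolding PrLk_def by blast
qed

lemma PrLk_basis_subset: "PrLk_basis r k \<subseteq> PrLk r k"
  unfolding PrLk_basis_def using basis_form_in_PrLk by auto

lemma basis_form_in_span:
  assumes "t \<in> const_form_index k" and "int (sum \<beta> UNIV) \<le> r"
  shows "basis_form k \<beta> t \<in> forms.span (PrLk_basis r k)"
  using assms(2)
proof (induction "nat r - sum \<beta> UNIV" arbitrary: \<beta>)
  case 0
  then have "int (sum \<beta> UNIV) = r"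
    by arith
  then have "\<beta> \<in> exps_of_degree r"
    by (simp add: exps_of_degree_def del: of_nat_sum)
  then show ?case
    using assms(1) by (intro forms.span_base) (force simp: PrLk_basis_def)
next
  case (Suc n)
  have "basis_form k \<beta> t
      = restr_T3 k (\<lambda>x vs. \<Sum>i\<in>UNIV. monomial (\<beta>(i := Suc (\<beta> i))) x * const_form k t vs)"
    unfolding basis_form_def
    by (rule restr_T3_cong) (simp add: monomial_homogenize[where \<beta> = \<beta>] sum_distrib_right)
  also have "\<dots> = (\<Sum>i\<in>UNIV. basis_form k (\<beta>(i := Suc (\<beta> i))) t)"
    unfolding restr_T3_sum basis_form_def ..
  also have "\<dots> \<in> forms.span (PrLk_basis r k)"
  proof (rule forms.span_sum)
    fix i
    have "n = nat r - sum (\<beta>(i := Suc (\<beta> i))) UNIV \<and> int (sum (\<beta>(i := Suc (\<beta> i))) UNIV) \<le> r"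
      unfolding sum_increment using Suc.hyps(2) by arith
    then show "basis_form k (\<beta>(i := Suc (\<beta> i))) t \<in> forms.span (PrLk_basis r k)"
      using Suc.hyps(1) by blast
  qed
  finally show ?case .
qed

lemma monomial_wedge_dl_in_span:
  assumes "k \<le> 3" and "int (sum \<beta> UNIV) \<le> r"
  shows "restr_T3 k (\<lambda>x vs. monomial \<beta> x * wedge_dl k s vs) \<in> forms.span (PrLk_basis r k)"
proof -
  let ?c = "\<lambda>t. wedge_dl k s (dual_vecs k t) / dual_norm k"
  have "wedge_dl k s vs = (\<Sum>t\<in>const_form_index k. ?c t * const_form k t vs)"
    if "\<forall>j<k. vs j \<in> tangentV" for vs
    using wedge_dl_tangent_decompose[OF assms(1) that]
    by (simp add: sum_divide_distrib[symmetric] nonzero_eq_divide_eq mult.commute)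
  then have "restr_T3 k (\<lambda>x vs. monomial \<beta> x * wedge_dl k s vs)
      = restr_T3 k (\<lambda>x vs. \<Sum>t\<in>const_form_index k. ?c t * (monomial \<beta> x * const_form k t vs))"
    by (intro restr_T3_cong) (simp add: sum_distrib_left algebra_simps)
  also have "\<dots> = (\<Sum>t\<in>const_form_index k. fscale (?c t) (basis_form k \<beta> t))"
    unfolding restr_T3_sum restr_T3_scale basis_form_def ..
  also have "\<dots> \<in> forms.span (PrLk_basis r k)"
    by (intro forms.span_sum forms.span_scale basis_form_in_span assms(2))
  finally show ?thesis .
qed

lemma poly_wedge_dl_in_span:
  assumes "k \<le> 3" and "poly_fun r q"
  shows "restr_T3 k (\<lambda>x vs. q x * wedge_dl k s vs) \<in> forms.span (PrLk_basis r k)"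
proof -
  let ?D = "{\<beta>::4 \<Rightarrow> nat. int (sum \<beta> UNIV) \<le> r}"
  obtain c where q: "q = (\<lambda>x. \<Sum>\<beta>\<in>?D. c \<beta> * monomial \<beta> x)"
    using assms(2) unfolding poly_fun_def monomial_def by blast
  have "restr_T3 k (\<lambda>x vs. q x * wedge_dl k s vs)
      = restr_T3 k (\<lambda>x vs. \<Sum>\<beta>\<in>?D. c \<beta> * (monomial \<beta> x * wedge_dl k s vs))"
    by (simp add: q sum_distrib_right mult.assoc)
  also have "\<dots> = (\<Sum>\<beta>\<in>?D. fscale (c \<beta>) (restr_T3 k (\<lambda>x vs. monomial \<beta> x * wedge_dl k s vs)))"
    unfolding restr_T3_sum restr_T3_scale ..
  also have "\<dots> \<in> forms.span (PrLk_basis r k)"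
    by (intro forms.span_sum forms.span_scale monomial_wedge_dl_in_span assms(1)) simp
  finally show ?thesis .
qed

lemma PrLk_subset_span:
  assumes "k \<le> 3"
  shows "PrLk r k \<subseteq> forms.span (PrLk_basis r k)"
proof
  fix f assume "f \<in> PrLk r k"
  then obtain p where f: "f = restr_T3 k (form_eval k p)" and p: "\<forall>s. poly_fun r (p s)"
    unfolding PrLk_def by blast
  have "f = (\<Sum>s\<in>PiE {..<k} (\<lambda>_. UNIV). restr_T3 k (\<lambda>x vs. p s x * wedge_dl k s vs))"
    unfolding f form_eval_def restr_T3_sum ..
  also have "\<dots> \<in> forms.span (PrLk_basis r k)"
    using p by (intro forms.span_sum poly_wedge_dl_in_span assms) simp
  finally show "f \<in> forms.span (PrLk_basis r k)" .
qed

lemma span_PrLk_basis: "k \<le> 3 \<Longrightarrow> forms.span (PrLk_basis r k) = PrLk r k"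
  using forms.span_minimal[OF PrLk_basis_subset PrLk_subspace] PrLk_subset_span by blast

lemma basis_form_lincomb_zero_imp_coeff_zero:
  assumes "k \<le> 3" and "finite I" and I: "I \<subseteq> exps_of_degree r \<times> const_form_index k"
    and zero: "(\<Sum>i\<in>I. fscale (u i) (case i of (\<alpha>, t) \<Rightarrow> basis_form k \<alpha> t)) = 0"
    and "i \<in> I"
  shows "u i = 0"
proof -
  obtain \<alpha>0 t0 where i: "i = (\<alpha>0, t0)"
    by (cases i)
  have t0: "t0 \<in> const_form_index k"
    using I \<open>i \<in> I\<close> i by auto
  define A where "A = {\<alpha>. (\<alpha>, t0) \<in> I}"
  have "A \<subseteq> fst ` I"
    by (force simp: A_def)
  then have "finite A"
    using \<open>finite I\<close> finite_subset by blast
  have vanish: "(\<Sum>\<alpha>\<in>A. dual_norm k * u (\<alpha>, t0) * monomial \<alpha> x) = 0" if "x \<in> T3" for x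
  proof -
    let ?E = "dual_vecs k t0"
    have tangent: "\<forall>j<k. ?E j \<in> tangentV"
      by (simp add: dual_vecs_tangent)
    have "0 = (\<Sum>i\<in>I. fscale (u i) (case i of (\<alpha>, t) \<Rightarrow> basis_form k \<alpha> t)) x ?E"
      using zero by simp
    also have "\<dots> = (\<Sum>i\<in>I. u i * (monomial (fst i) x * const_form k (snd i) ?E))"
      unfolding sum_form_apply fscale_def
      by (intro sum.cong refl) (simp add: split_beta basis_form_apply[OF that tangent])
    also have "\<dots> = (\<Sum>i\<in>I. if snd i = t0 then dual_norm k * u i * monomial (fst i) x else 0)"
      using I t0 by (intro sum.cong refl) (auto simp: const_form_dual[OF assms(1)])
    also have "\<dots> = (\<Sum>i\<in>{i\<in>I. snd i = t0}. dual_norm k * u i * monomial (fst i) x)"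
      using \<open>finite I\<close> by (simp add: sum.inter_filter)
    also have "{i\<in>I. snd i = t0} = (\<lambda>\<alpha>. (\<alpha>, t0)) ` A"
      by (force simp: A_def)
    also have "(\<Sum>i\<in>(\<lambda>\<alpha>. (\<alpha>, t0)) ` A. dual_norm k * u i * monomial (fst i) x)
        = (\<Sum>\<alpha>\<in>A. dual_norm k * u (\<alpha>, t0) * monomial \<alpha> x)"
      by (simp add: sum.reindex inj_on_def)
    finally show ?thesis
      by simp
  qed
  have degree: "sum \<alpha> UNIV = nat r" if "\<alpha> \<in> A" for \<alpha>
    using I that by (auto simp: A_def exps_of_degree_def simp del: of_nat_sum)
  have "\<alpha>0 \<in> A"
    using \<open>i \<in> I\<close> i by (simp add: A_def)
  from homogeneous_monomials_independent_on_T3[OF \<open>finite A\<close> degree vanish this]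
  have "dual_norm k * u (\<alpha>0, t0) = 0" .
  then show ?thesis
    by (simp add: i)
qed

lemma PrLk_basis_independent: "k \<le> 3 \<Longrightarrow> \<not> forms.dependent (PrLk_basis r k)"
  unfolding PrLk_basis_def by (rule forms.independent_imageI) (rule basis_form_lincomb_zero_imp_coeff_zero)

lemma pullback_basis_form:
  assumes "\<pi> permutes UNIV"
  shows "pullback \<pi> (basis_form k \<alpha> (a, b, c, d))
           = restr_T3 k (\<lambda>x vs. monomial (\<alpha> \<circ> inv \<pi>) x * const_form k (\<pi> a, \<pi> b, \<pi> c, \<pi> d) vs)"
  by (auto simp: pullback_def basis_form_def restr_T3_def fun_eq_iff S_perm_T3_iff[OF assms]
      S_perm_tangentV_iff[OF assms] monomial_S_perm[OF assms] const_form_S_perm[OF assms])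

lemma pullback_PrLk_basis:
  assumes "k \<le> 3" and "\<pi> permutes UNIV" and "f \<in> PrLk_basis r k"
  shows "\<exists>f'\<in>PrLk_basis r k. pullback \<pi> f = f' \<or> pullback \<pi> f = - f'"
proof -
  obtain \<alpha> a b c d where \<alpha>: "\<alpha> \<in> exps_of_degree r" and t: "(a, b, c, d) \<in> const_form_index k"
    and f: "f = basis_form k \<alpha> (a, b, c, d)"
    using assms(3) unfolding PrLk_basis_def by auto
  have "distinct [\<pi> a, \<pi> b, \<pi> c, \<pi> d]"
    using t permutes_inj[OF assms(2)]
    by (auto simp: const_form_index_def inj_eq split: if_splits)
  then obtain t' \<epsilon> where t': "t' \<in> const_form_index k" and \<epsilon>: "\<epsilon> \<in> {-1, 1}"
    and sign: "\<And>vs. \<forall>j<k. vs j \<in> tangentV \<Longrightarrow>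
      const_form k (\<pi> a, \<pi> b, \<pi> c, \<pi> d) vs = \<epsilon> * const_form k t' vs"
    using const_form_permuted[OF assms(1)] by blast
  have "sum (\<alpha> \<circ> inv \<pi>) UNIV = sum \<alpha> UNIV"
    using sum.permute[OF permutes_inv[OF assms(2)], of \<alpha>] by simp
  then have "\<alpha> \<circ> inv \<pi> \<in> exps_of_degree r"
    using \<alpha> unfolding exps_of_degree_def mem_Collect_eq by argo
  then have f': "basis_form k (\<alpha> \<circ> inv \<pi>) t' \<in> PrLk_basis r k"
    using t' by (force simp: PrLk_basis_def)
  have "pullback \<pi> f
      = restr_T3 k (\<lambda>x vs. monomial (\<alpha> \<circ> inv \<pi>) x * const_form k (\<pi> a, \<pi> b, \<pi> c, \<pi> d) vs)"
    unfolding f by (rule pullback_basis_form[OF assms(2)])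
  also have "\<dots> = fscale \<epsilon> (basis_form k (\<alpha> \<circ> inv \<pi>) t')"
    by (auto simp: basis_form_def restr_T3_def fscale_def fun_eq_iff sign)
  finally have "pullback \<pi> f = fscale \<epsilon> (basis_form k (\<alpha> \<circ> inv \<pi>) t')" .
  moreover have "fscale 1 g = g" and "fscale (- 1) g = - g" for g :: "real^4 \<Rightarrow> (nat \<Rightarrow> real^4) \<Rightarrow> real"
    by (simp_all add: fscale_def fun_eq_iff)
  ultimately show ?thesis
    using \<epsilon> f' by (metis insertE singletonD)
qed

theorem corollary2p12:
  fixes r :: int and k :: nat
  assumes "k \<le> 3"
  shows "\<exists>B. B \<subseteq> PrLk r k
            \<and> \<not> module.dependent fscale B
            \<and> module.span fscale B = PrLk r k
            \<and> (\<forall>\<pi>. \<pi> permutes (UNIV :: 4 set) \<longrightarrow>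
                 (\<forall>b\<in>B. \<exists>b'\<in>B. pullback \<pi> b = b' \<or> pullback \<pi> b = - b'))"
proof (intro exI conjI)
  show "PrLk_basis r k \<subseteq> PrLk r k"
    by (rule PrLk_basis_subset)
  show "\<not> module.dependent fscale (PrLk_basis r k)"
    using PrLk_basis_independent[OF assms] .
  show "module.span fscale (PrLk_basis r k) = PrLk r k"
    using span_PrLk_basis[OF assms] .
  show "\<forall>\<pi>. \<pi> permutes UNIV \<longrightarrow> (\<forall>b\<in>PrLk_basis r k. \<exists>b'\<in>PrLk_basis r k. pullback \<pi> b = b' \<or> pullback \<pi> b = - b')"
    using pullback_PrLk_basis[OF assms] by blast
qed

end
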